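(* Let $A$ be a densely defined closed operator in a complex Hilbert space with $\operatorname{D}(A)\subset\operatorname{D}(A^* )$ and $\operatorname{Num}(A)\subset\{z:\operatorname{Im}z\ge0\}$. Assume that for every sequence $a_n>0$ with $a_n\to0$ one has $K(a_n)\to\infty$, where $$K(a)=\inf\Big\{\tfrac{\operatorname{Im}\langle Av,v\rangle}{(\operatorname{Re}\langle Av,v\rangle)^2}: v\in\operatorname{D}(A),\|v\|=1,\ 0<|\langle Av,v\rangle|<a,\ \operatorname{Re}\langle Av,v\rangle>0\Big\}.$$ Let $\alpha\in\mathbb{C}$ with $0<\operatorname{Re}\alpha<1$, $0<\operatorname{Im}\alpha<1$, $|\alpha|<1$, let $(\varepsilon_n)\subset(0,1)$ with $\varepsilon_n\to0$, and let $(u_n)\subset\operatorname{D}(A)$ with $\|u_n\|=1$ and $\langle Au_n,u_n\rangle=\varepsilon_n\alpha$. Let $(v_n)\subset\operatorname{D}(A)$ satisfy $\max(\sup_n\|v_n\|,\sup_n\|Av_n\|,\sup_n\|A^*v_n\|)\le1$ and $\sup_n|\operatorname{Re}\langle Av_n,v_n\rangle|\le\operatorname{Re}(\alpha)/2$. Then $$\operatorname{Re}(\langle Av_n,u_n\rangle+\langle Au_n,v_n\rangle)\to0\quad(n\to\infty).$$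
   Context: $\operatorname{Num}(A)=\{\langle Af,f\rangle: f\in\operatorname{D}(A),\|f\|=1\}$. The infimum of the empty set is $+\infty$. *)

theory Defs
  imports "HOL-Analysis.Analysis" "HOL-Library.Extended_Real"
begin

text \<open>HOL-Analysis has no complex inner product spaces, so a complex Hilbert space is
given explicitly: the additive group is the type 'a (class ab_group_add), complex scalar
multiplication sc and an inner product ip, linear in the first and conjugate-linear in the
second argument.\<close>

definition hnorm :: "('a \<Rightarrow> 'a \<Rightarrow> complex) \<Rightarrow> 'a \<Rightarrow> real" where
  "hnorm ip x = sqrt (Re (ip x x))"

definition hconv :: "('a \<Rightarrow> 'a \<Rightarrow> complex) \<Rightarrow> (nat \<Rightarrow> 'a::ab_group_add) \<Rightarrow> 'a \<Rightarrow> bool" where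
  "hconv ip X x \<longleftrightarrow> (\<forall>e>0. \<exists>N. \<forall>n\<ge>N. hnorm ip (X n - x) < e)"

definition complex_hilbert ::
  "(complex \<Rightarrow> 'a::ab_group_add \<Rightarrow> 'a) \<Rightarrow> ('a \<Rightarrow> 'a \<Rightarrow> complex) \<Rightarrow> bool" where
  "complex_hilbert sc ip \<longleftrightarrow>
     (\<forall>c x y. sc c (x + y) = sc c x + sc c y) \<and>
     (\<forall>c d x. sc (c + d) x = sc c x + sc d x) \<and>
     (\<forall>c d x. sc c (sc d x) = sc (c * d) x) \<and>
     (\<forall>x. sc 1 x = x) \<and>
     (\<forall>x y z. ip (x + y) z = ip x z + ip y z) \<and>
     (\<forall>c x y. ip (sc c x) y = c * ip x y) \<and>
     (\<forall>x y. ip y x = cnj (ip x y)) \<and>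
     (\<forall>x. 0 \<le> Re (ip x x)) \<and>
     (\<forall>x. ip x x = 0 \<longrightarrow> x = 0) \<and>
     (\<forall>X. (\<forall>e>0. \<exists>N. \<forall>m\<ge>N. \<forall>n\<ge>N. hnorm ip (X m - X n) < e)
          \<longrightarrow> (\<exists>x. hconv ip X x))"

text \<open>A (possibly unbounded) linear operator is a domain D together with a map A;
the values of A outside D are irrelevant.\<close>

definition lin_operator ::
  "(complex \<Rightarrow> 'a::ab_group_add \<Rightarrow> 'a) \<Rightarrow> 'a set \<Rightarrow> ('a \<Rightarrow> 'a) \<Rightarrow> bool" where
  "lin_operator sc D A \<longleftrightarrow>
     0 \<in> D \<and> (\<forall>x\<in>D. \<forall>y\<in>D. x + y \<in> D) \<and> (\<forall>c. \<forall>x\<in>D. sc c x \<in> D) \<and>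
     (\<forall>x\<in>D. \<forall>y\<in>D. A (x + y) = A x + A y) \<and> (\<forall>c. \<forall>x\<in>D. A (sc c x) = sc c (A x))"

definition densely_defined :: "('a \<Rightarrow> 'a \<Rightarrow> complex) \<Rightarrow> 'a::ab_group_add set \<Rightarrow> bool" where
  "densely_defined ip D \<longleftrightarrow> (\<forall>x. \<forall>e>0. \<exists>y\<in>D. hnorm ip (x - y) < e)"

definition closed_operator ::
  "('a \<Rightarrow> 'a \<Rightarrow> complex) \<Rightarrow> 'a::ab_group_add set \<Rightarrow> ('a \<Rightarrow> 'a) \<Rightarrow> bool" where
  "closed_operator ip D A \<longleftrightarrow>
     (\<forall>X x y. (\<forall>n. X n \<in> D) \<longrightarrow> hconv ip X x \<longrightarrow> hconv ip (\<lambda>n. A (X n)) y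
        \<longrightarrow> x \<in> D \<and> A x = y)"

definition adj_dom :: "('a \<Rightarrow> 'a \<Rightarrow> complex) \<Rightarrow> 'a set \<Rightarrow> ('a \<Rightarrow> 'a) \<Rightarrow> 'a set" where
  "adj_dom ip D A = {y. \<exists>z. \<forall>x\<in>D. ip (A x) y = ip x z}"

definition adj :: "('a \<Rightarrow> 'a \<Rightarrow> complex) \<Rightarrow> 'a set \<Rightarrow> ('a \<Rightarrow> 'a) \<Rightarrow> 'a \<Rightarrow> 'a" where
  "adj ip D A y = (THE z. \<forall>x\<in>D. ip (A x) y = ip x z)"

definition num_range :: "('a \<Rightarrow> 'a \<Rightarrow> complex) \<Rightarrow> 'a set \<Rightarrow> ('a \<Rightarrow> 'a) \<Rightarrow> complex set" where
  "num_range ip D A = {ip (A f) f | f. f \<in> D \<and> hnorm ip f = 1}"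

text \<open>K(a), as an extended real; the infimum of the empty set is +infinity.\<close>

definition Kfun :: "('a \<Rightarrow> 'a \<Rightarrow> complex) \<Rightarrow> 'a set \<Rightarrow> ('a \<Rightarrow> 'a) \<Rightarrow> real \<Rightarrow> ereal" where
  "Kfun ip D A a = Inf {ereal (Im (ip (A v) v) / (Re (ip (A v) v))\<^sup>2) | v.
      v \<in> D \<and> hnorm ip v = 1 \<and> 0 < cmod (ip (A v) v) \<and> cmod (ip (A v) v) < a
      \<and> Re (ip (A v) v) > 0}"

end

theory Submission
  imports Defs
begin

text \<open>Perturb the quasi-eigenvector \<open>u\<close> along \<open>v\<close>: for \<open>w = u + t v\<close> the quadratic form is
  \<open>\<langle>Aw,w\<rangle> = \<epsilon>\<alpha> + t P + t\<^sup>2\<langle>Av,v\<rangle>\<close> with cross term \<open>P = \<langle>Au,v\<rangle> + \<langle>Av,u\<rangle>\<close>.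
  Choosing \<open>t = \<plusminus>\<surd>\<epsilon>/4\<close> with the sign of \<open>Re P\<close>, the real part is at least \<open>\<surd>\<epsilon> \<bar>Re P\<bar>/4\<close>,
  while the imaginary part is at most \<open>3\<epsilon>\<close>: the term \<open>t Im P\<close> is controlled because the numerical
  range lies in the closed upper half plane for both signs of \<open>t\<close>. Since \<open>\<parallel>w\<parallel> \<approx> 1\<close>, the
  normalised \<open>w\<close> shows \<open>K(10\<surd>\<epsilon>) \<le> 96/(Re P)\<^sup>2\<close>. So if \<open>\<bar>Re P\<^sub>n\<bar> \<ge> d > 0\<close> infinitely
  often, \<open>K(10\<surd>\<epsilon>\<^sub>n)\<close> cannot tend to infinity.\<close>

lemma perturbation_norm_bounds:
  fixes t c m :: real
  assumes t: "\<bar>t\<bar> \<le> 1/4" and c: "\<bar>c\<bar> \<le> 1" and m: "0 \<le> m" "m \<le> 1"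
  shows "1/2 \<le> 1 + 2 * t * c + t^2 * m" and "1 + 2 * t * c + t^2 * m \<le> 2"
proof -
  have "\<bar>2 * t * c\<bar> \<le> 2 * (1/4) * 1"
    unfolding abs_mult using t c by (intro mult_mono) auto
  then have "- (1/2) \<le> 2 * t * c" "2 * t * c \<le> 1/2" by (simp_all add: abs_le_iff)
  moreover have "t^2 \<le> (1/4)^2"
    using t by (metis abs_ge_zero power2_abs power_mono)
  then have "t^2 * m \<le> (1/4)^2 * 1"
    using m by (intro mult_mono) auto
  moreover have "0 \<le> t^2 * m" using m by simp
  ultimately show "1/2 \<le> 1 + 2 * t * c + t^2 * m" "1 + 2 * t * c + t^2 * m \<le> 2"
    by (simp_all add: power_divide)
qed

text \<open>In the application \<open>X + iY = \<langle>Aw,w\<rangle>\<close> and \<open>N = \<parallel>w\<parallel>\<^sup>2\<close> for \<open>w = u + tv\<close>, with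
  \<open>a + ib = \<alpha>\<close>, \<open>\<rho> + i\<sigma> = \<langle>Av,v\<rangle>\<close>, \<open>R + iI = P\<close> and \<open>\<epsilon> = e\<close>.\<close>

lemma perturbed_form_estimates:
  fixes e t d R I \<rho> \<sigma> a b N :: real
  assumes e: "0 < e" "e < 1"
    and t: "t^2 = e / 16" "t * R = sqrt e * \<bar>R\<bar> / 4"
    and R: "0 < d" "d \<le> \<bar>R\<bar>" "\<bar>R\<bar> \<le> 2"
    and a: "0 < a" "a < 1" and b: "b \<le> 1"
    and \<rho>: "\<bar>\<rho>\<bar> \<le> a / 2" and \<sigma>: "\<sigma> \<le> 1"
    and Y_nonneg: "0 \<le> e * b + t * I + t^2 * \<sigma>" "0 \<le> e * b - t * I + t^2 * \<sigma>"
    and N: "1/2 \<le> N" "N \<le> 2"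
  defines "X \<equiv> e * a + t * R + t^2 * \<rho>" and "Y \<equiv> e * b + t * I + t^2 * \<sigma>"
  shows "0 < X" and "N * Y / X^2 \<le> 96 / d^2" and "\<bar>X\<bar> + \<bar>Y\<bar> < 10 * sqrt e * N"
proof -
  define r where "r = sqrt e"
  have r: "0 < r" "r < 1" "r^2 = e" using e by (simp_all add: r_def)
  have e_le_r: "e \<le> r"
    using r by (auto simp: power2_eq_square mult_left_le)
  have "t^2 = (r / 4)^2" using t(1) r by (simp add: power_divide)
  then have abs_t: "\<bar>t\<bar> = r / 4"
    using r by (metis abs_of_pos divide_pos_pos power2_abs real_sqrt_abs zero_less_numeral)
  have \<rho>_part: "\<bar>t^2 * \<rho>\<bar> \<le> e * a / 32"
    using \<rho> e unfolding abs_mult t(1) by (simp add: field_simps)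
  have "r * d \<le> r * \<bar>R\<bar>" using R r by (simp add: mult_left_mono)
  moreover have "0 < e * a" using e a by simp
  ultimately have X_ge: "d * r / 4 \<le> X"
    unfolding X_def t(2) r_def[symmetric] using \<rho>_part by (simp add: abs_le_iff mult.commute)
  then show X_pos: "0 < X" using R r by (smt (verit) divide_pos_pos mult_pos_pos)
  have "e * b \<le> e" using b e by (simp add: mult_left_le)
  moreover have "t^2 * \<sigma> \<le> e / 16" using \<sigma> e unfolding t(1) by (simp add: mult_left_le)
  ultimately have Y_le: "Y \<le> 3 * e" using Y_nonneg(2) e unfolding Y_def by linarith
  have Y_ge: "0 \<le> Y" unfolding Y_def by (fact Y_nonneg(1))
  have "N * Y / X^2 \<le> (2 * (3 * e)) / (d * r / 4)^2"
    using N Y_le Y_ge X_ge R r e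
    by (intro frac_le mult_mono power_mono) auto
  also have "\<dots> = 96 / d^2" using r R e by (simp add: power_mult_distrib power_divide field_simps)
  finally show "N * Y / X^2 \<le> 96 / d^2" .
  have "\<bar>t * R\<bar> \<le> r / 2" unfolding abs_mult abs_t using R r by simp
  moreover have "\<bar>e * a\<bar> \<le> e" using e a by (simp add: abs_mult mult_left_le)
  moreover have "\<bar>t^2 * \<rho>\<bar> \<le> e / 32" using \<rho>_part e a \<open>\<bar>e * a\<bar> \<le> e\<close> by linarith
  ultimately have "\<bar>X\<bar> \<le> e + r / 2 + e / 32" unfolding X_def by linarith
  then have "\<bar>X\<bar> + \<bar>Y\<bar> < 5 * r" using Y_le Y_ge e_le_r r by linarith
  also have "\<dots> \<le> 10 * r * N" using r N by simp
  finally show "\<bar>X\<bar> + \<bar>Y\<bar> < 10 * sqrt e * N" unfolding r_def .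
qed

locale complex_hilbert_space =
  fixes sc :: "complex \<Rightarrow> 'a::ab_group_add \<Rightarrow> 'a" and ip :: "'a \<Rightarrow> 'a \<Rightarrow> complex"
  assumes complex_hilbert: "complex_hilbert sc ip"
begin

lemma ip_add_left: "ip (x + y) z = ip x z + ip y z"
  using complex_hilbert unfolding complex_hilbert_def by (elim conjE) metis

lemma ip_sc_left: "ip (sc c x) y = c * ip x y"
  using complex_hilbert unfolding complex_hilbert_def by (elim conjE) metis

lemma ip_cnj: "ip y x = cnj (ip x y)"
  using complex_hilbert unfolding complex_hilbert_def by (elim conjE) metis

lemma Re_ip_self_nonneg: "0 \<le> Re (ip x x)"
  using complex_hilbert unfolding complex_hilbert_def by (elim conjE) metis

lemma ip_self_eq_0: "ip x x = 0 \<Longrightarrow> x = 0"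
  using complex_hilbert unfolding complex_hilbert_def by (elim conjE) metis

lemma ip_zero_left [simp]: "ip 0 y = 0"
  using ip_add_left[of 0 0 y] by simp

lemma ip_add_right: "ip z (x + y) = ip z x + ip z y"
  using ip_cnj[of z "x + y"] ip_cnj[of z x] ip_cnj[of z y] ip_add_left[of x y z] by simp

lemma ip_sc_right: "ip x (sc c y) = cnj c * ip x y"
  using ip_cnj[of x "sc c y"] ip_cnj[of x y] ip_sc_left[of c y x] by simp

lemma ip_minus_left: "ip (- x) y = - ip x y"
  using ip_add_left[of x "- x" y] by (simp add: eq_neg_iff_add_eq_0 add.commute)

lemma ip_diff_left: "ip (x - y) z = ip x z - ip y z"
  by (simp only: diff_conv_add_uminus ip_add_left ip_minus_left)

lemma ip_diff_right: "ip z (x - y) = ip z x - ip z y"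
  using ip_cnj[of z "x - y"] ip_cnj[of z x] ip_cnj[of z y] ip_diff_left[of x y z] by simp

lemma Re_ip_commute: "Re (ip y x) = Re (ip x y)"
  using ip_cnj[of y x] by simp

lemma ip_self_real: "ip x x = of_real (Re (ip x x))"
  using ip_cnj[of x x] by (simp add: complex_eq_iff)

lemma Re_ip_self_pos: "x \<noteq> 0 \<Longrightarrow> 0 < Re (ip x x)"
  using Re_ip_self_nonneg[of x] ip_self_real[of x] ip_self_eq_0[of x]
  by (metis less_eq_real_def of_real_0)

lemma hnorm_square: "(hnorm ip x)^2 = Re (ip x x)"
  unfolding hnorm_def using Re_ip_self_nonneg by simp

lemma Re_ip_self_le_1: "hnorm ip x \<le> 1 \<Longrightarrow> Re (ip x x) \<le> 1"
  unfolding hnorm_def by simp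

lemma abs_Re_ip_le: "2 * \<bar>Re (ip x y)\<bar> \<le> Re (ip x x) + Re (ip y y)"
proof -
  have "0 \<le> Re (ip (x - y) (x - y))" "0 \<le> Re (ip (x + y) (x + y))"
    by (fact Re_ip_self_nonneg)+
  then show ?thesis
    using Re_ip_commute[of x y]
    by (simp add: ip_diff_left ip_diff_right ip_add_left ip_add_right abs_le_iff)
qed

lemma abs_Im_ip_le: "2 * \<bar>Im (ip x y)\<bar> \<le> Re (ip x x) + Re (ip y y)"
  using abs_Re_ip_le[of x "sc \<i> y"] by (simp add: ip_sc_left ip_sc_right)

lemma abs_Re_ip_le_1: "hnorm ip x \<le> 1 \<Longrightarrow> hnorm ip y \<le> 1 \<Longrightarrow> \<bar>Re (ip x y)\<bar> \<le> 1"
  using abs_Re_ip_le[of x y] Re_ip_self_le_1[of x] Re_ip_self_le_1[of y] by linarith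

lemma abs_Im_ip_le_1: "hnorm ip x \<le> 1 \<Longrightarrow> hnorm ip y \<le> 1 \<Longrightarrow> \<bar>Im (ip x y)\<bar> \<le> 1"
  using abs_Im_ip_le[of x y] Re_ip_self_le_1[of x] Re_ip_self_le_1[of y] by linarith

lemma ip_add_scaled:
  "ip (a + sc (of_real t) b) (x + sc (of_real t) y)
     = ip a x + of_real t * (ip a y + ip b x) + of_real (t^2) * ip b y"
  by (simp add: ip_add_left ip_add_right ip_sc_left ip_sc_right algebra_simps power2_eq_square)

lemma orthogonal_to_dense_eq_0:
  assumes dense: "densely_defined ip D" and orth: "\<forall>x\<in>D. ip x z = 0"
  shows "z = 0"
proof (rule ccontr)
  assume "z \<noteq> 0"
  then have pos: "0 < Re (ip z z)" by (rule Re_ip_self_pos)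
  then obtain y where y: "y \<in> D" "hnorm ip (z - y) < sqrt (Re (ip z z))"
    using dense unfolding densely_defined_def by (meson real_sqrt_gt_zero)
  have "Re (ip z z) \<le> Re (ip (z - y) (z - y))"
    using abs_Re_ip_le[of "z - y" z] orth y(1) by (simp add: ip_diff_left)
  moreover have "Re (ip (z - y) (z - y)) < Re (ip z z)"
    using y(2) unfolding hnorm_def by simp
  ultimately show False by simp
qed

end

locale complex_hilbert_operator = complex_hilbert_space sc ip
  for sc :: "complex \<Rightarrow> 'a::ab_group_add \<Rightarrow> 'a" and ip +
  fixes D :: "'a set" and A :: "'a \<Rightarrow> 'a"
  assumes lin_operator: "lin_operator sc D A"
begin

lemma domain_add: "x \<in> D \<Longrightarrow> y \<in> D \<Longrightarrow> x + y \<in> D"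
  using lin_operator unfolding lin_operator_def by blast

lemma domain_scale: "x \<in> D \<Longrightarrow> sc c x \<in> D"
  using lin_operator unfolding lin_operator_def by blast

lemma A_add: "x \<in> D \<Longrightarrow> y \<in> D \<Longrightarrow> A (x + y) = A x + A y"
  using lin_operator unfolding lin_operator_def by blast

lemma A_scale: "x \<in> D \<Longrightarrow> A (sc c x) = sc c (A x)"
  using lin_operator unfolding lin_operator_def by blast

lemma A_zero [simp]: "A 0 = 0"
  using A_add[of 0 0] lin_operator unfolding lin_operator_def by simp

lemma quadratic_form_add_scaled:
  assumes "x \<in> D" "y \<in> D"
  shows "ip (A (x + sc (of_real t) y)) (x + sc (of_real t) y)
           = ip (A x) x + of_real t * (ip (A x) y + ip (A y) x) + of_real (t^2) * ip (A y) y"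
  using assms by (simp add: A_add A_scale domain_scale ip_add_scaled)

lemma normalized_vector:
  assumes "w \<in> D" "w \<noteq> 0"
  obtains h where "h \<in> D" "hnorm ip h = 1" "ip (A h) h = ip (A w) w / of_real (Re (ip w w))"
proof
  define N where "N = Re (ip w w)"
  have N: "0 < N" unfolding N_def using assms(2) by (rule Re_ip_self_pos)
  define h where "h = sc (of_real (1 / sqrt N)) w"
  have scale: "ip (sc (of_real (1 / sqrt N)) x) (sc (of_real (1 / sqrt N)) y) = ip x y / of_real N"
    for x y
  proof -
    have "complex_of_real (1 / sqrt N) * complex_of_real (1 / sqrt N) = 1 / of_real N"
      using N by (simp flip: of_real_mult)
    then show ?thesis by (simp add: ip_sc_left ip_sc_right flip: mult.assoc)
  qed
  show "h \<in> D" unfolding h_def using assms(1) by (rule domain_scale)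
  have "ip w w = of_real N" unfolding N_def by (rule ip_self_real)
  then have "ip h h = 1" unfolding h_def scale using N by simp
  then show "hnorm ip h = 1" unfolding hnorm_def by simp
  show "ip (A h) h = ip (A w) w / of_real (Re (ip w w))"
    using scale[of "A w" w] unfolding h_def A_scale[OF assms(1)] N_def .
qed

lemma Im_quadratic_form_nonneg:
  assumes num: "num_range ip D A \<subseteq> {z. 0 \<le> Im z}" and w: "w \<in> D"
  shows "0 \<le> Im (ip (A w) w)"
proof (cases "w = 0")
  case False
  then obtain h where h: "h \<in> D" "hnorm ip h = 1" "ip (A h) h = ip (A w) w / of_real (Re (ip w w))"
    using w normalized_vector by blast
  then have "0 \<le> Im (ip (A w) w) / Re (ip w w)"
    using num unfolding num_range_def by (force simp: Im_divide_of_real)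
  then show ?thesis using Re_ip_self_pos[OF False] by (simp add: zero_le_divide_iff)
qed simp

lemma Kfun_le_quotient:
  assumes w: "w \<in> D" and Re_pos: "0 < Re (ip (A w) w)"
    and small: "cmod (ip (A w) w) < a * Re (ip w w)"
  shows "Kfun ip D A a \<le> ereal (Re (ip w w) * Im (ip (A w) w) / (Re (ip (A w) w))^2)"
proof -
  have "w \<noteq> 0" using Re_pos by auto
  then obtain h where h: "h \<in> D" "hnorm ip h = 1" "ip (A h) h = ip (A w) w / of_real (Re (ip w w))"
    using w normalized_vector by blast
  have N: "0 < Re (ip w w)" using \<open>w \<noteq> 0\<close> by (rule Re_ip_self_pos)
  have "Im (ip (A h) h) / (Re (ip (A h) h))^2 = Re (ip w w) * Im (ip (A w) w) / (Re (ip (A w) w))^2"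
    using N unfolding h(3) by (simp add: Re_divide_of_real Im_divide_of_real power2_eq_square field_simps)
  moreover have "0 < cmod (ip (A w) w)" using Re_pos by auto
  moreover have "0 < Re (ip (A h) h)" "0 < cmod (ip (A h) h)" "cmod (ip (A h) h) < a"
    using N Re_pos small \<open>0 < cmod (ip (A w) w)\<close> unfolding h(3)
    by (auto simp: Re_divide_of_real norm_divide pos_divide_less_eq)
  ultimately show ?thesis
    unfolding Kfun_def using h(1,2) by (intro Inf_lower) force
qed

lemma adj_eq:
  assumes dense: "densely_defined ip D" and dom_adj: "D \<subseteq> adj_dom ip D A"
    and x: "x \<in> D" and y: "y \<in> D"
  shows "ip (A x) y = ip x (adj ip D A y)"
proof -
  obtain z where z: "\<forall>x\<in>D. ip (A x) y = ip x z"
    using dom_adj y unfolding adj_dom_def by blast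
  have "adj ip D A y = z" unfolding adj_def
  proof (rule the_equality)
    fix z' assume "\<forall>x\<in>D. ip (A x) y = ip x z'"
    then have "\<forall>x\<in>D. ip x (z' - z) = 0" using z by (simp add: ip_diff_right)
    then have "z' - z = 0" by (rule orthogonal_to_dense_eq_0[OF dense])
    then show "z' = z" by simp
  qed (fact z)
  then show ?thesis using z x by simp
qed

lemma Kfun_bound_from_cross_term:
  assumes dense: "densely_defined ip D" and dom_adj: "D \<subseteq> adj_dom ip D A"
    and num: "num_range ip D A \<subseteq> {z. 0 \<le> Im z}"
    and \<alpha>: "0 < Re \<alpha>" "Re \<alpha> < 1" "Im \<alpha> \<le> 1"
    and e: "0 < e" "e < 1"
    and u: "u \<in> D" "hnorm ip u = 1" "ip (A u) u = of_real e * \<alpha>"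
    and v: "v \<in> D" "hnorm ip v \<le> 1" "hnorm ip (A v) \<le> 1" "hnorm ip (adj ip D A v) \<le> 1"
      "\<bar>Re (ip (A v) v)\<bar> \<le> Re \<alpha> / 2"
    and d: "0 < d" "d \<le> \<bar>Re (ip (A v) u + ip (A u) v)\<bar>"
  shows "Kfun ip D A (10 * sqrt e) \<le> ereal (96 / d^2)"
proof -
  define P where "P = ip (A u) v + ip (A v) u"
  define q where "q = ip (A v) v"
  have u_le: "hnorm ip u \<le> 1" using u(2) by simp
  \<comment> \<open>\<open>\<parallel>Au\<parallel>\<close> is not controlled, so \<open>\<langle>Au,v\<rangle>\<close> is bounded through \<open>\<langle>u,A\<^sup>*v\<rangle>\<close>.\<close>
  have "\<bar>Re (ip (A u) v)\<bar> \<le> 1"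
    using abs_Re_ip_le_1[OF u_le v(4)] adj_eq[OF dense dom_adj u(1) v(1)] by simp
  moreover have "\<bar>Re (ip (A v) u)\<bar> \<le> 1" using abs_Re_ip_le_1[OF v(3) u_le] .
  ultimately have P_le: "\<bar>Re P\<bar> \<le> 2" unfolding P_def by simp
  have d_le: "d \<le> \<bar>Re P\<bar>" using d(2) unfolding P_def by (simp add: add.commute)
  define t where "t = sgn (Re P) * sqrt e / 4"
  have "Re P \<noteq> 0" using d(1) d_le by auto
  then have t: "t^2 = e / 16" "t * Re P = sqrt e * \<bar>Re P\<bar> / 4"
    unfolding t_def using e by (auto simp: power_mult_distrib power_divide sgn_if)
  have form: "ip (A (u + sc (of_real s) v)) (u + sc (of_real s) v)
      = of_real e * \<alpha> + of_real s * P + of_real (s^2) * q" for s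
    using quadratic_form_add_scaled[OF u(1) v(1)] u(3) unfolding P_def q_def by simp
  have Im_nonneg: "0 \<le> e * Im \<alpha> + s * Im P + s^2 * Im q" for s
    using Im_quadratic_form_nonneg[OF num domain_add[OF u(1) domain_scale[OF v(1)]], of "of_real s"]
    unfolding form by simp
  define w where "w = u + sc (of_real t) v"
  have "Re (ip w w) = 1 + 2 * t * Re (ip u v) + t^2 * Re (ip v v)"
    using u(2) hnorm_square[of u] Re_ip_commute[of u v] unfolding w_def ip_add_scaled by simp
  moreover have "\<bar>t\<bar> \<le> 1/4" using e unfolding t_def by (simp add: abs_mult sgn_if)
  ultimately have N: "1/2 \<le> Re (ip w w)" "Re (ip w w) \<le> 2"
    using perturbation_norm_bounds[of t "Re (ip u v)" "Re (ip v v)"]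
      abs_Re_ip_le_1[OF u_le v(2)] Re_ip_self_nonneg[of v] Re_ip_self_le_1[OF v(2)] by simp_all
  have Im_q: "Im q \<le> 1" using abs_Im_ip_le_1[OF v(3,2)] unfolding q_def by simp
  have "0 \<le> e * Im \<alpha> - t * Im P + t^2 * Im q" using Im_nonneg[of "-t"] by simp
  note est = perturbed_form_estimates[OF e t d(1) d_le P_le \<alpha> v(5)[folded q_def] Im_q
      Im_nonneg[of t] this N]
  have w_D: "w \<in> D" unfolding w_def by (intro domain_add domain_scale u(1) v(1))
  have Re_w: "Re (ip (A w) w) = e * Re \<alpha> + t * Re P + t^2 * Re q"
    and Im_w: "Im (ip (A w) w) = e * Im \<alpha> + t * Im P + t^2 * Im q"
    unfolding w_def form by simp_all
  have "cmod (ip (A w) w) < 10 * sqrt e * Re (ip w w)"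
    using est(3) cmod_le[of "ip (A w) w"] unfolding Re_w Im_w by linarith
  then have "Kfun ip D A (10 * sqrt e)
      \<le> ereal (Re (ip w w) * Im (ip (A w) w) / (Re (ip (A w) w))^2)"
    using w_D est(1) Re_w by (intro Kfun_le_quotient) auto
  also have "\<dots> \<le> ereal (96 / d^2)" using est(2) unfolding Re_w Im_w by simp
  finally show ?thesis .
qed

end

theorem mainTheorem10:
  fixes sc :: "complex \<Rightarrow> 'a::ab_group_add \<Rightarrow> 'a"
    and ip :: "'a \<Rightarrow> 'a \<Rightarrow> complex"
    and D :: "'a set" and A :: "'a \<Rightarrow> 'a"
    and \<alpha> :: complex and \<epsilon> :: "nat \<Rightarrow> real" and u v :: "nat \<Rightarrow> 'a"
  assumes hilbert: "complex_hilbert sc ip"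
    and lin: "lin_operator sc D A"
    and dense: "densely_defined ip D"
    and closed: "closed_operator ip D A"
    and dom_adj: "D \<subseteq> adj_dom ip D A"
    and num: "num_range ip D A \<subseteq> {z. Im z \<ge> 0}"
    and K: "\<And>a :: nat \<Rightarrow> real. (\<forall>n. a n > 0) \<Longrightarrow> a \<longlonglongrightarrow> 0 \<Longrightarrow>
              (\<lambda>n. Kfun ip D A (a n)) \<longlonglongrightarrow> (\<infinity>::ereal)"
    and alpha: "0 < Re \<alpha>" "Re \<alpha> < 1" "0 < Im \<alpha>" "Im \<alpha> < 1" "cmod \<alpha> < 1"
    and eps: "\<forall>n. 0 < \<epsilon> n \<and> \<epsilon> n < 1" "\<epsilon> \<longlonglongrightarrow> 0"
    and u: "\<forall>n. u n \<in> D \<and> hnorm ip (u n) = 1 \<and> ip (A (u n)) (u n) = complex_of_real (\<epsilon> n) * \<alpha>"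
    and v: "\<forall>n. v n \<in> D"
    and vbound: "\<forall>n. hnorm ip (v n) \<le> 1 \<and> hnorm ip (A (v n)) \<le> 1
                   \<and> hnorm ip (adj ip D A (v n)) \<le> 1"
    and vre: "\<forall>n. \<bar>Re (ip (A (v n)) (v n))\<bar> \<le> Re \<alpha> / 2"
  shows "(\<lambda>n. Re (ip (A (v n)) (u n) + ip (A (u n)) (v n))) \<longlonglongrightarrow> 0"
proof (rule ccontr)
  interpret complex_hilbert_operator sc ip D A
    using hilbert lin by (intro complex_hilbert_operator.intro complex_hilbert_space.intro
        complex_hilbert_operator_axioms.intro)
  assume "\<not> ?thesis"
  then obtain d where d: "0 < d"
    and often: "\<And>M. \<exists>n\<ge>M. d \<le> \<bar>Re (ip (A (v n)) (u n) + ip (A (u n)) (v n))\<bar>"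
    unfolding LIMSEQ_iff by (auto simp: not_less)
  have "(\<lambda>n. 10 * sqrt (\<epsilon> n)) \<longlonglongrightarrow> 10 * sqrt 0"
    by (intro tendsto_intros eps(2))
  then have "(\<lambda>n. Kfun ip D A (10 * sqrt (\<epsilon> n))) \<longlonglongrightarrow> \<infinity>"
    using eps(1) by (intro K) auto
  then have "\<forall>\<^sub>F n in sequentially. ereal (96 / d^2) < Kfun ip D A (10 * sqrt (\<epsilon> n))"
    by (rule order_tendstoD(1)) simp
  then obtain M where M: "\<And>n. n \<ge> M \<Longrightarrow> ereal (96 / d^2) < Kfun ip D A (10 * sqrt (\<epsilon> n))"
    unfolding eventually_sequentially by blast
  obtain n where "n \<ge> M" "d \<le> \<bar>Re (ip (A (v n)) (u n) + ip (A (u n)) (v n))\<bar>"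
    using often by blast
  then have "Kfun ip D A (10 * sqrt (\<epsilon> n)) \<le> ereal (96 / d^2)"
    using alpha eps(1) u v vbound vre d
    by (intro Kfun_bound_from_cross_term[OF dense dom_adj num]) auto
  with M[OF \<open>n \<ge> M\<close>] show False by simp
qed

end
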